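(* Let $R$ be an affine algebra over a field $K$ with no zero divisors which is not amenable. Then there exist a finite-dimensional $K$-subspace $Z\subseteq R$ and $\epsilon>0$ such that for every nonzero finite-dimensional $K$-subspace $V\subseteq R$, $$\frac{\dim_K(VZ+V)}{\dim_K(V)}>1+\epsilon.$$
   Context: An affine algebra is a finitely generated associative algebra over $K$, not necessarily unital. For subspaces $V,Z$, $VZ$ denotes the $K$-span of all products $vz$, $v\in V$, $z\in Z$. $R$ is amenable if there exist finite-dimensional $K$-subspaces $W_1\subseteq W_2\subseteq\cdots$ with $\bigcup_nW_n=R$ such that for every $r\in R$, $\lim_{n\to\infty}\dim_K(W_nr+W_n)/\dim_K(W_n)=1$. *)

theory Defs
  imports Complex_Main
begin

text \<open>An associative (not necessarily unital) algebra over a field 'k, carried by the type 'a,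
  with scalar multiplication scale: 'a is a 'k-vector space and multiplication is bilinear.\<close>
definition is_algebra :: "('k::field \<Rightarrow> 'a::ring \<Rightarrow> 'a) \<Rightarrow> bool" where
  "is_algebra scale \<longleftrightarrow> vector_space scale \<and>
     (\<forall>c x y. scale c (x * y) = scale c x * y \<and> scale c (x * y) = x * scale c y)"

inductive_set subalg_gen :: "('k::field \<Rightarrow> 'a::ring \<Rightarrow> 'a) \<Rightarrow> 'a set \<Rightarrow> 'a set"
  for scale :: "'k \<Rightarrow> 'a \<Rightarrow> 'a" and S :: "'a set" where
  gen: "x \<in> S \<Longrightarrow> x \<in> subalg_gen scale S"
| zero: "0 \<in> subalg_gen scale S"
| add: "x \<in> subalg_gen scale S \<Longrightarrow> y \<in> subalg_gen scale S \<Longrightarrow> x + y \<in> subalg_gen scale S"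
| smult: "x \<in> subalg_gen scale S \<Longrightarrow> scale c x \<in> subalg_gen scale S"
| mult: "x \<in> subalg_gen scale S \<Longrightarrow> y \<in> subalg_gen scale S \<Longrightarrow> x * y \<in> subalg_gen scale S"

definition affine_algebra :: "('k::field \<Rightarrow> 'a::ring \<Rightarrow> 'a) \<Rightarrow> bool" where
  "affine_algebra scale \<longleftrightarrow> is_algebra scale \<and> (\<exists>S. finite S \<and> subalg_gen scale S = UNIV)"

definition fd_subspace :: "('k::field \<Rightarrow> 'a::ring \<Rightarrow> 'a) \<Rightarrow> 'a set \<Rightarrow> bool" where
  "fd_subspace scale V \<longleftrightarrow> module.subspace scale V \<and> (\<exists>B. finite B \<and> V = module.span scale B)"

definition prod_space :: "('k::field \<Rightarrow> 'a::ring \<Rightarrow> 'a) \<Rightarrow> 'a set \<Rightarrow> 'a set \<Rightarrow> 'a set" where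
  "prod_space scale V Z = module.span scale {v * z | v z. v \<in> V \<and> z \<in> Z}"

definition sum_space :: "'a::ab_group_add set \<Rightarrow> 'a set \<Rightarrow> 'a set" where
  "sum_space A B = {x + y | x y. x \<in> A \<and> y \<in> B}"

definition amenable :: "('k::field \<Rightarrow> 'a::ring \<Rightarrow> 'a) \<Rightarrow> bool" where
  "amenable scale \<longleftrightarrow> (\<exists>W :: nat \<Rightarrow> 'a set.
     (\<forall>n. fd_subspace scale (W n)) \<and> (\<forall>n. W n \<subseteq> W (Suc n)) \<and> (\<Union>n. W n) = UNIV \<and>
     (\<forall>r. (\<lambda>n. real (vector_space.dim scale (sum_space {w * r | w. w \<in> W n} (W n)))
               / real (vector_space.dim scale (W n))) \<longlonglongrightarrow> 1))"

end

theory Submission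
  imports Defs "HOL-Library.Set_Algebras"
begin

(*
  Suppose the conclusion fails: for every finite-dimensional Z and every e > 0 some nonzero
  finite-dimensional V satisfies dim (VZ + V) <= (1 + e) dim V.  As R has no zero divisors,
  multiplication by a nonzero v in V embeds Z into VZ, so dim (VZ + V) >= dim Z.  If R is
  infinite-dimensional, enlarging Z by a subspace of huge dimension therefore forces dim V to
  be huge, and then V + X still nearly satisfies the inequality for any prescribed
  finite-dimensional X.
  Exhausting R by the spans U_n of the products of depth n of the generators and choosing
  W_n containing W_(n-1) + U_n with dim (W_n U_n + W_n) <= (1 + 1/(n+1)) dim W_n then yields a
  Folner sequence, so R would be amenable.
*)

lemma sum_space_upper:
  shows "0 \<in> W \<Longrightarrow> V \<subseteq> sum_space V W" and "0 \<in> V \<Longrightarrow> W \<subseteq> sum_space V W"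
  unfolding sum_space_def by force+

primrec iter_products :: "'a::times set \<Rightarrow> nat \<Rightarrow> 'a set" where
  "iter_products S 0 = S"
| "iter_products S (Suc n) = iter_products S n \<union> iter_products S n * iter_products S n"

lemma finite_iter_products: "finite S \<Longrightarrow> finite (iter_products S n)"
  by (induction n) (simp_all add: finite_set_times)

context vector_space
begin

lemma sum_space_span: "sum_space (span A) (span B) = span (A \<union> B)"
  unfolding sum_space_def span_Un by simp

lemma dim_mono_finite:
  assumes "finite W" "T \<subseteq> span W" "S \<subseteq> T"
  shows "dim S \<le> dim T"
proof -
  obtain B where B: "B \<subseteq> T" "independent B" "T \<subseteq> span B" "card B = dim T"
    by (rule basis_exists)
  have "finite B"
    using independent_span_bound[OF assms(1) B(2)] B(1) assms(2) by blast
  then have "dim S \<le> card B"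
    using assms(3) B(3) by (intro dim_le_card) auto
  with B(4) show ?thesis by simp
qed

lemma dim_Un_le: "finite A \<Longrightarrow> finite B \<Longrightarrow> dim (A \<union> B) \<le> dim A + dim B"
proof -
  assume fin: "finite A" "finite B"
  obtain BA where BA: "BA \<subseteq> A" "independent BA" "A \<subseteq> span BA" "card BA = dim A"
    by (rule basis_exists)
  obtain BB where BB: "BB \<subseteq> B" "independent BB" "B \<subseteq> span BB" "card BB = dim B"
    by (rule basis_exists)
  have "span BA \<subseteq> span (BA \<union> BB)" "span BB \<subseteq> span (BA \<union> BB)"
    by (simp_all add: span_mono)
  then have "A \<union> B \<subseteq> span (BA \<union> BB)"
    using BA(3) BB(3) by blast
  moreover have "finite (BA \<union> BB)"
    using BA(1) BB(1) fin finite_subset by blast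
  ultimately have "dim (A \<union> B) \<le> card (BA \<union> BB)"
    by (rule dim_le_card)
  also have "\<dots> \<le> card BA + card BB" by (rule card_Un_le)
  finally show ?thesis using BA BB by simp
qed

lemma exists_finite_independent_card:
  assumes "\<And>W. finite W \<Longrightarrow> span W \<noteq> UNIV"
  shows "\<exists>T. finite T \<and> independent T \<and> card T = n"
proof -
  obtain B where "independent B" "span B = UNIV"
    using maximal_independent_subset[of UNIV] by (metis span_UNIV span_eq)
  then have "infinite B" using assms by blast
  then obtain T where T: "T \<subseteq> B" "finite T" "card T = n"
    using infinite_arbitrarily_large by blast
  moreover have "independent T"
    using independent_mono[OF \<open>independent B\<close> T(1)] .
  ultimately show ?thesis by auto
qed

end

locale assoc_algebra = vector_space scale for scale :: "'k::field \<Rightarrow> 'a::ring \<Rightarrow> 'a" +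
  assumes scale_mult_left: "scale c (x * y) = scale c x * y"
    and scale_mult_right: "scale c (x * y) = x * scale c y"

lemma assoc_algebra_iff_is_algebra: "assoc_algebra scale \<longleftrightarrow> is_algebra scale"
  unfolding assoc_algebra_def assoc_algebra_axioms_def is_algebra_def by blast

context assoc_algebra
begin

abbreviation nbhd :: "'a set \<Rightarrow> 'a set \<Rightarrow> 'a set" where
  "nbhd V Z \<equiv> sum_space (prod_space scale V Z) V"

lemma module_hom_mult_left: "module_hom scale scale (\<lambda>y. x * y)"
  by (simp add: module_hom_iff distrib_left module_axioms flip: scale_mult_right)

lemma module_hom_mult_right: "module_hom scale scale (\<lambda>x. x * y)"
  by (simp add: module_hom_iff distrib_right module_axioms flip: scale_mult_left)

lemma span_times_span: "span (span A * span B) = span (A * B)"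
proof
  show "span (A * B) \<subseteq> span (span A * span B)"
    by (intro span_mono set_times_mono2 span_superset)
  have "x * y \<in> span (A * B)" if x: "x \<in> span A" and y: "y \<in> span B" for x y
  proof -
    have "a * y \<in> span (A * B)" if "a \<in> A" for a
    proof -
      have "B \<subseteq> (\<lambda>y. a * y) -` span (A * B)"
        using \<open>a \<in> A\<close> by (auto intro: span_base)
      moreover have "subspace ((\<lambda>y. a * y) -` span (A * B))"
        by (rule module_hom.subspace_vimage[OF module_hom_mult_left subspace_span])
      ultimately show ?thesis
        using span_minimal y by blast
    qed
    then have "A \<subseteq> (\<lambda>x. x * y) -` span (A * B)"
      by blast
    moreover have "subspace ((\<lambda>x. x * y) -` span (A * B))"
      by (rule module_hom.subspace_vimage[OF module_hom_mult_right subspace_span])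
    ultimately show ?thesis
      using span_minimal x by blast
  qed
  then show "span (span A * span B) \<subseteq> span (A * B)"
    by (intro span_minimal[OF _ subspace_span]) (auto elim: set_times_elim)
qed

lemma prod_space_eq_span: "prod_space scale V Z = span (V * Z)"
  unfolding prod_space_def set_times_def by (rule arg_cong[of _ _ span]) blast

lemma nbhd_span: "nbhd (span A) (span B) = span (A * B \<union> A)"
  by (simp add: prod_space_eq_span span_times_span sum_space_span)

lemma fd_subspace_iff: "fd_subspace scale V \<longleftrightarrow> (\<exists>B. finite B \<and> V = span B)"
  unfolding fd_subspace_def by (auto simp: subspace_span)

lemma fd_subspace_span: "finite B \<Longrightarrow> fd_subspace scale (span B)"
  unfolding fd_subspace_iff by blast

lemma fd_subspace_0: "fd_subspace scale V \<Longrightarrow> 0 \<in> V"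
  unfolding fd_subspace_iff by (auto simp: span_zero)

lemma fd_subspace_sum_space:
  assumes "fd_subspace scale V" "fd_subspace scale W"
  shows "fd_subspace scale (sum_space V W)"
proof -
  obtain A B where "finite A" "V = span A" "finite B" "W = span B"
    using assms unfolding fd_subspace_iff by blast
  then show ?thesis
    unfolding fd_subspace_iff by (intro exI[of _ "A \<union> B"]) (simp add: sum_space_span)
qed

lemma fd_subspace_nbhd:
  assumes "fd_subspace scale V" "fd_subspace scale Z"
  shows "fd_subspace scale (nbhd V Z)"
proof -
  obtain A B where "finite A" "V = span A" "finite B" "Z = span B"
    using assms unfolding fd_subspace_iff by blast
  then show ?thesis
    unfolding fd_subspace_iff
    by (intro exI[of _ "A * B \<union> A"]) (simp add: nbhd_span finite_set_times)
qed

lemma dim_subset_fd: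
  assumes "S \<subseteq> T" "fd_subspace scale T"
  shows "dim S \<le> dim T"
proof -
  obtain B where "finite B" "T = span B"
    using assms(2) unfolding fd_subspace_iff by blast
  then show ?thesis
    using dim_mono_finite[of B T S] assms by simp
qed

lemma independent_card_le_dim_fd:
  "independent I \<Longrightarrow> I \<subseteq> T \<Longrightarrow> fd_subspace scale T \<Longrightarrow> card I \<le> dim T"
  using dim_subset_fd[of I T] dim_eq_card_independent[of I] by simp

lemma dim_pos_fd:
  assumes "fd_subspace scale V" "V \<noteq> {0}"
  shows "0 < dim V"
proof -
  obtain x where "x \<in> V" "x \<noteq> 0"
    using assms fd_subspace_0 by blast
  then have "card {x} \<le> dim V"
    using independent_card_le_dim_fd[of "{x}"] assms(1) by (simp add: independent_insert)
  then show ?thesis by simp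
qed

lemma dim_sum_space_le:
  assumes "fd_subspace scale V" "fd_subspace scale W"
  shows "dim (sum_space V W) \<le> dim V + dim W"
proof -
  obtain A B where "finite A" "V = span A" "finite B" "W = span B"
    using assms unfolding fd_subspace_iff by blast
  then show ?thesis
    using dim_Un_le[of A B] by (simp add: sum_space_span)
qed

lemma nbhd_mono: "V \<subseteq> V' \<Longrightarrow> Z \<subseteq> Z' \<Longrightarrow> nbhd V Z \<subseteq> nbhd V' Z'"
  unfolding prod_space_eq_span sum_space_def using span_mono[OF set_times_mono2] by blast

lemma nbhd_sum_space:
  assumes "subspace V" "subspace U" "subspace Z"
  shows "nbhd (sum_space V U) Z = sum_space (nbhd V Z) (nbhd U Z)"
proof -
  have spans: "span V = V" "span U = U" "span Z = Z"
    using assms by simp_all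
  have "nbhd (sum_space V U) Z = nbhd (span (V \<union> U)) (span Z)"
    by (metis spans sum_space_span)
  also have "\<dots> = span ((V * Z \<union> V) \<union> (U * Z \<union> U))"
    by (simp add: nbhd_span set_times_Un_distrib Un_ac)
  also have "\<dots> = sum_space (nbhd (span V) (span Z)) (nbhd (span U) (span Z))"
    by (simp add: nbhd_span sum_space_span)
  finally show ?thesis
    by (simp only: spans)
qed

lemma dim_nbhd_sum_space_le:
  assumes "fd_subspace scale V" "fd_subspace scale U" "fd_subspace scale Z"
  shows "dim (nbhd (sum_space V U) Z) \<le> dim (nbhd V Z) + dim (nbhd U Z)"
  using assms nbhd_sum_space[of V U Z] dim_sum_space_le fd_subspace_nbhd
  by (simp add: fd_subspace_def)

lemma incseq_span_iter_products: "incseq (\<lambda>n. span (iter_products S n))"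
  by (rule incseq_SucI) (simp add: span_mono)

lemma span_iter_products_exhaust:
  assumes "subalg_gen scale S = UNIV"
  shows "(\<Union>n. span (iter_products S n)) = UNIV"
proof -
  have mono: "span (iter_products S m) \<subseteq> span (iter_products S n)" if "m \<le> n" for m n
    using incseqD[OF incseq_span_iter_products that] .
  have "\<exists>n. x \<in> span (iter_products S n)" if "x \<in> subalg_gen scale S" for x
    using that
  proof (induction rule: subalg_gen.induct)
    case (gen x)
    then show ?case
      by (metis iter_products.simps(1) span_base)
  next
    case zero
    then show ?case
      using span_zero by blast
  next
    case (add x y)
    then obtain m n where "x \<in> span (iter_products S m)" "y \<in> span (iter_products S n)"
      by blast
    then have "x \<in> span (iter_products S (max m n))" "y \<in> span (iter_products S (max m n))"
      using mono[of m "max m n"] mono[of n "max m n"] by auto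
    then have "x + y \<in> span (iter_products S (max m n))"
      by (rule span_add)
    then show ?case ..
  next
    case (smult x c)
    then show ?case
      using span_scale by blast
  next
    case (mult x y)
    then obtain m n where "x \<in> span (iter_products S m)" "y \<in> span (iter_products S n)"
      by blast
    then have "x * y \<in> span (span (iter_products S (max m n)) * span (iter_products S (max m n)))"
      using mono[of m "max m n"] mono[of n "max m n"] by (auto intro: span_base)
    also have "\<dots> \<subseteq> span (iter_products S (Suc (max m n)))"
      unfolding span_times_span by (rule span_mono) simp
    finally show ?case ..
  qed
  then show ?thesis
    using assms by blast
qed

lemma dim_translate_bounds:
  assumes W: "fd_subspace scale W" and Z: "fd_subspace scale Z" and "r \<in> Z"
  shows "dim W \<le> dim (sum_space {w * r |w. w \<in> W} W)"
    and "dim (sum_space {w * r |w. w \<in> W} W) \<le> dim (nbhd W Z)"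
proof -
  have sub: "sum_space {w * r |w. w \<in> W} W \<subseteq> nbhd W Z"
    unfolding sum_space_def prod_space_eq_span using \<open>r \<in> Z\<close> by (auto intro!: span_base)
  then show "dim (sum_space {w * r |w. w \<in> W} W) \<le> dim (nbhd W Z)"
    using dim_subset_fd fd_subspace_nbhd[OF W Z] by blast
  obtain B where "finite B" "nbhd W Z = span B"
    using fd_subspace_nbhd[OF W Z] unfolding fd_subspace_iff by blast
  moreover have "W \<subseteq> sum_space {w * r |w. w \<in> W} W"
    using fd_subspace_0[OF W] by (intro sum_space_upper(2)) force
  ultimately show "dim W \<le> dim (sum_space {w * r |w. w \<in> W} W)"
    using sub by (intro dim_mono_finite[of B]) auto
qed

lemma tendsto_translate_ratio:
  assumes W: "\<And>n. fd_subspace scale (W n)" "\<And>n. W n \<noteq> {0}"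
    and bound: "\<And>n. real (dim (nbhd (W n) (U n))) \<le> (1 + inverse (real (Suc n))) * real (dim (W n))"
    and U: "\<And>n. fd_subspace scale (U n)" "incseq U" and "r \<in> U m"
  shows "(\<lambda>n. real (dim (sum_space {w * r |w. w \<in> W n} (W n))) / real (dim (W n))) \<longlonglongrightarrow> 1"
proof (rule tendsto_sandwich[OF _ _ tendsto_const LIMSEQ_inverse_real_of_nat_add])
  have "1 \<le> real (dim (sum_space {w * r |w. w \<in> W n} (W n))) / real (dim (W n)) \<and>
      real (dim (sum_space {w * r |w. w \<in> W n} (W n))) / real (dim (W n))
        \<le> 1 + inverse (real (Suc n))" if "m \<le> n" for n
  proof -
    have "r \<in> U n"
      using \<open>r \<in> U m\<close> incseqD[OF U(2) that] by blast
    note bounds = dim_translate_bounds[OF W(1)[of n] U(1)[of n] this]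
    have "real (dim (sum_space {w * r |w. w \<in> W n} (W n)))
        \<le> (1 + inverse (real (Suc n))) * real (dim (W n))"
      using bounds(2) bound[of n] by linarith
    then show ?thesis
      using bounds(1) dim_pos_fd[OF W(1,2)] by (simp add: divide_le_eq le_divide_eq)
  qed
  then show "\<forall>\<^sub>F n in sequentially.
      1 \<le> real (dim (sum_space {w * r |w. w \<in> W n} (W n))) / real (dim (W n))"
    and "\<forall>\<^sub>F n in sequentially.
      real (dim (sum_space {w * r |w. w \<in> W n} (W n))) / real (dim (W n))
        \<le> 1 + inverse (real (Suc n))"
    unfolding eventually_sequentially by blast+
qed

lemma amenable_if_foelner_extension:
  assumes U: "\<And>n. fd_subspace scale (U n)" "incseq U" "(\<Union>n. U n) = UNIV"
    and ext: "\<And>X Z e. fd_subspace scale X \<Longrightarrow> fd_subspace scale Z \<Longrightarrow> 0 < e \<Longrightarrow>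
      \<exists>V. fd_subspace scale V \<and> X \<subseteq> V \<and> V \<noteq> {0} \<and>
        real (dim (nbhd V Z)) \<le> (1 + e) * real (dim V)"
  shows "amenable scale"
proof -
  define good where "good n V \<longleftrightarrow> fd_subspace scale V \<and> U n \<subseteq> V \<and> V \<noteq> {0} \<and>
      real (dim (nbhd V (U n))) \<le> (1 + inverse (real (Suc n))) * real (dim V)" for n V
  have "\<exists>W. \<forall>n. good n (W n) \<and> W n \<subseteq> W (Suc n)"
  proof (rule dependent_nat_choice)
    show "\<exists>V. good 0 V"
      using ext[OF U(1) U(1), of 1] unfolding good_def by simp
    show "\<exists>V'. good (Suc n) V' \<and> V \<subseteq> V'" if "good n V" for n V
    proof -
      have V: "fd_subspace scale V"
        using that unfolding good_def by blast
      obtain V' where "fd_subspace scale V'" "sum_space V (U (Suc n)) \<subseteq> V'" "V' \<noteq> {0}"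
        "real (dim (nbhd V' (U (Suc n)))) \<le> (1 + inverse (real (Suc (Suc n)))) * real (dim V')"
        using ext[OF fd_subspace_sum_space[OF V U(1)[of "Suc n"]] U(1)[of "Suc n"],
            of "inverse (real (Suc (Suc n)))"]
        by auto
      moreover have "V \<subseteq> sum_space V (U (Suc n))"
        by (rule sum_space_upper(1)[OF fd_subspace_0[OF U(1)]])
      moreover have "U (Suc n) \<subseteq> sum_space V (U (Suc n))"
        by (rule sum_space_upper(2)[OF fd_subspace_0[OF V]])
      ultimately show ?thesis
        unfolding good_def by blast
    qed
  qed
  then obtain W where W: "\<And>n. good n (W n)" "\<And>n. W n \<subseteq> W (Suc n)"
    by blast
  have "(\<lambda>n. real (dim (sum_space {w * r |w. w \<in> W n} (W n))) / real (dim (W n))) \<longlonglongrightarrow> 1"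
    for r
  proof -
    obtain m where "r \<in> U m"
      using U(3) by blast
    then show ?thesis
      using W(1) U(1,2) unfolding good_def by (intro tendsto_translate_ratio) blast+
  qed
  moreover have "(\<Union>n. W n) = UNIV"
    using U(3) W(1) unfolding good_def by blast
  ultimately show ?thesis
    unfolding amenable_def using W unfolding good_def by blast
qed

end

locale domain_algebra = assoc_algebra scale
  for scale :: "'k::field \<Rightarrow> 'a::ring_no_zero_divisors \<Rightarrow> 'a"
begin

lemma dim_le_dim_nbhd:
  assumes V: "fd_subspace scale V" "V \<noteq> {0}" and Z: "fd_subspace scale Z"
  shows "dim Z \<le> dim (nbhd V Z)"
proof -
  obtain v where v: "v \<in> V" "v \<noteq> 0"
    using V fd_subspace_0 by blast
  obtain B where B: "B \<subseteq> Z" "independent B" "Z \<subseteq> span B" "card B = dim Z"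
    by (rule basis_exists)
  have inj: "inj (\<lambda>z. v * z)"
    using v(2) by (simp add: inj_on_def)
  have "independent ((\<lambda>z. v * z) ` B)"
    using module_hom.independent_injective_image[OF module_hom_mult_left B(2)] inj
    by (simp add: inj_on_subset)
  moreover have "(\<lambda>z. v * z) ` B \<subseteq> nbhd V Z"
  proof -
    have "(\<lambda>z. v * z) ` B \<subseteq> prod_space scale V Z"
      unfolding prod_space_eq_span using v(1) B(1) by (auto intro: span_base)
    then show ?thesis
      using sum_space_upper(1)[OF fd_subspace_0[OF V(1)]] by blast
  qed
  ultimately have "card ((\<lambda>z. v * z) ` B) \<le> dim (nbhd V Z)"
    using independent_card_le_dim_fd fd_subspace_nbhd[OF V(1) Z] by blast
  then show ?thesis
    using card_image[OF inj_on_subset[OF inj]] B(4) by simp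
qed

lemma large_foelner_subspace:
  assumes weak: "\<And>Z e. fd_subspace scale Z \<Longrightarrow> 0 < e \<Longrightarrow>
      \<exists>V. fd_subspace scale V \<and> V \<noteq> {0} \<and> real (dim (nbhd V Z)) \<le> (1 + e) * real (dim V)"
    and infinite_dim: "\<not> fd_subspace scale UNIV"
    and Z: "fd_subspace scale Z" and e: "0 < e"
  shows "\<exists>V. fd_subspace scale V \<and> V \<noteq> {0} \<and>
      real (dim (nbhd V Z)) \<le> (1 + e) * real (dim V) \<and> N \<le> real (dim V)"
proof -
  obtain n :: nat where n: "(1 + e) * N \<le> n"
    using real_arch_simple by blast
  obtain T where T: "finite T" "independent T" "card T = n"
    using exists_finite_independent_card infinite_dim unfolding fd_subspace_iff by metis
  define Z' where "Z' = sum_space Z (span T)"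
  have Z': "fd_subspace scale Z'" "Z \<subseteq> Z'" "T \<subseteq> Z'"
    unfolding Z'_def using fd_subspace_sum_space[OF Z fd_subspace_span[OF T(1)]]
      sum_space_upper(1)[OF span_zero] sum_space_upper(2)[OF fd_subspace_0[OF Z]] span_superset
    by blast+
  obtain V where V: "fd_subspace scale V" "V \<noteq> {0}"
    "real (dim (nbhd V Z')) \<le> (1 + e) * real (dim V)"
    using weak[OF Z'(1) e] by blast
  have "n \<le> dim (nbhd V Z')"
    using independent_card_le_dim_fd[OF T(2) Z'(3) Z'(1)] dim_le_dim_nbhd[OF V(1,2) Z'(1)] T(3)
    by linarith
  then have "(1 + e) * N \<le> (1 + e) * real (dim V)"
    using n V(3) by linarith
  then have "N \<le> real (dim V)"
    using e by simp
  moreover have "dim (nbhd V Z) \<le> dim (nbhd V Z')"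
    using dim_subset_fd[OF nbhd_mono[OF order_refl Z'(2)] fd_subspace_nbhd[OF V(1) Z'(1)]] .
  ultimately show ?thesis
    using V by (intro exI[of _ V]) simp
qed

lemma foelner_extension:
  assumes weak: "\<And>Z e. fd_subspace scale Z \<Longrightarrow> 0 < e \<Longrightarrow>
      \<exists>V. fd_subspace scale V \<and> V \<noteq> {0} \<and> real (dim (nbhd V Z)) \<le> (1 + e) * real (dim V)"
    and X: "fd_subspace scale X" and Z: "fd_subspace scale Z" and e: "0 < e"
  shows "\<exists>V. fd_subspace scale V \<and> X \<subseteq> V \<and> V \<noteq> {0} \<and>
      real (dim (nbhd V Z)) \<le> (1 + e) * real (dim V)"
proof (cases "fd_subspace scale UNIV")
  case True
  obtain V where "fd_subspace scale V" "V \<noteq> {0}"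
    using weak[OF Z zero_less_one] by blast
  then have "UNIV \<noteq> {0::'a}"
    using fd_subspace_0 by blast
  moreover have "nbhd UNIV Z = UNIV"
    using sum_space_upper(2)[of "prod_space scale UNIV Z" UNIV]
    by (auto simp: prod_space_eq_span span_zero)
  moreover have "real (dim UNIV) \<le> (1 + e) * real (dim UNIV)"
    using e by (simp add: algebra_simps)
  ultimately show ?thesis
    using True by (intro exI[of _ UNIV]) simp
next
  case False
  define c where "c = real (dim (nbhd X Z))"
  obtain V0 where V0: "fd_subspace scale V0" "V0 \<noteq> {0}"
    "real (dim (nbhd V0 Z)) \<le> (1 + e / 2) * real (dim V0)" "c / (e / 2) \<le> real (dim V0)"
    using large_foelner_subspace[OF weak False Z, of "e / 2"] e by auto
  have c_small: "c \<le> e / 2 * real (dim V0)"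
    using V0(4) e by (simp add: divide_le_eq mult.commute)
  define V where "V = sum_space V0 X"
  have V: "fd_subspace scale V" "X \<subseteq> V" "V0 \<subseteq> V"
    unfolding V_def using fd_subspace_sum_space[OF V0(1) X]
      sum_space_upper(2)[OF fd_subspace_0[OF V0(1)]] sum_space_upper(1)[OF fd_subspace_0[OF X]]
    by blast+
  have "real (dim (nbhd V Z)) \<le> dim (nbhd V0 Z) + c"
    using dim_nbhd_sum_space_le[OF V0(1) X Z] unfolding V_def c_def by linarith
  also have "\<dots> \<le> (1 + e) * dim V0"
    using V0(3) c_small by (simp add: algebra_simps)
  also have "\<dots> \<le> (1 + e) * dim V"
    using dim_subset_fd[OF V(3) V(1)] e by simp
  finally have "real (dim (nbhd V Z)) \<le> (1 + e) * real (dim V)" .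
  moreover have "V \<noteq> {0}"
    using V(3) V0(2) fd_subspace_0[OF V0(1)] by blast
  ultimately show ?thesis
    using V(1,2) by (intro exI[of _ V]) simp
qed

end

theorem lemma1:
  fixes scale :: "'k::field \<Rightarrow> 'a::ring_no_zero_divisors \<Rightarrow> 'a"
  assumes "affine_algebra scale"
    and "\<not> amenable scale"
  shows "\<exists>Z \<epsilon>. fd_subspace scale Z \<and> \<epsilon> > (0::real) \<and>
           (\<forall>V. fd_subspace scale V \<and> V \<noteq> {0} \<longrightarrow>
              real (vector_space.dim scale (sum_space (prod_space scale V Z) V))
                / real (vector_space.dim scale V) > 1 + \<epsilon>)"
proof (rule ccontr)
  assume contra: "\<not> ?thesis"
  obtain S where "is_algebra scale" "finite S" "subalg_gen scale S = UNIV"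
    using assms(1) unfolding affine_algebra_def by blast
  interpret domain_algebra scale
    using \<open>is_algebra scale\<close> by (simp add: domain_algebra_def assoc_algebra_iff_is_algebra)
  have weak: "\<exists>V. fd_subspace scale V \<and> V \<noteq> {0} \<and> real (dim (nbhd V Z)) \<le> (1 + e) * real (dim V)"
    if "fd_subspace scale Z" "0 < e" for Z e
  proof -
    have "\<not> (\<forall>V. fd_subspace scale V \<and> V \<noteq> {0} \<longrightarrow>
        real (dim (nbhd V Z)) / real (dim V) > 1 + e)"
      using contra that by blast
    then obtain V where V: "fd_subspace scale V" "V \<noteq> {0}"
      "real (dim (nbhd V Z)) / real (dim V) \<le> 1 + e"
      by (auto simp: not_less)
    then show ?thesis
      using dim_pos_fd[OF V(1,2)] by (auto simp: pos_divide_le_eq)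
  qed
  have "amenable scale"
  proof (rule amenable_if_foelner_extension)
    show "fd_subspace scale (span (iter_products S n))" for n
      by (rule fd_subspace_span[OF finite_iter_products[OF \<open>finite S\<close>]])
    show "incseq (\<lambda>n. span (iter_products S n))"
      by (rule incseq_span_iter_products)
    show "(\<Union>n. span (iter_products S n)) = UNIV"
      by (rule span_iter_products_exhaust[OF \<open>subalg_gen scale S = UNIV\<close>])
  qed (rule foelner_extension[OF weak])
  with assms(2) show False ..
qed

end
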